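(* Let $V$ be a finite-dimensional vector space over a field $\mathbb{F}$ with fixed basis $e_1,\dots,e_n$, and let $N(t)$ be a nonsingular $\mathbb{F}(t)$-linear map $V(t)\to V(t)$. If $L$ and $L'$ are subspaces of $\bigwedge V$ such that $x\wedge x'=0$ for all $x\in L$, $x'\in L'$, then also $y\wedge y'=0$ for all $y\in NL$, $y'\in NL'$.
   Context: $\mathbb{F}(t)$ is the field of rational functions in a transcendental $t$; $V(t)=V\otimes_{\mathbb{F}}\mathbb{F}(t)$, and $N(t)$ extends to $\bigwedge V(t)$ by $u_1\wedge\cdots\wedge u_r\mapsto N(t)u_1\wedge\cdots\wedge N(t)u_r$ and linearity. $\bigwedge V$ is given the basis of monomials $e_{s_1}\wedge\cdots\wedge e_{s_r}$, $s_1<\cdots<s_r$. Limit action: for nonzero $x\in\bigwedge V$, write $N(t)x$ in the monomial basis, multiply by a nonzero element of $\mathbb{F}(t)$ so that all coefficients are polynomials in $t$ with no common divisor of positive $t$-degree, and evaluate at $t=0$; the result is a nonzero element $Nx$ of $\bigwedge V$, well defined up to nonzero scalar. For a subspace $L$, $NL$ is the subspace spanned by $\{Nx:x\in L\setminus\{0\}\}$ (equivalently, the limit of $L$ as a point of the appropriate Grassmannian); it has the same dimension as $L$. *)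

theory Defs
  imports Main "HOL-Library.Function_Algebras" "HOL-Computational_Algebra.Polynomial"
    "HOL-Computational_Algebra.Fraction_Field"
begin

text \<open>Exterior algebra of V = K^n with basis e_0,...,e_(n-1) (indices 0..n-1).
  An element of the exterior algebra is its coefficient function on monomials
  e_S = e_(s1) wedge ... wedge e_(sr), s1 < ... < sr, indexed by the subset S of {..<n}.\<close>

definition ext_alg :: "nat \<Rightarrow> (nat set \<Rightarrow> 'k::zero) set" where
  "ext_alg n = {x. \<forall>S. \<not> S \<subseteq> {..<n} \<longrightarrow> x S = 0}"

definition escale :: "'k::times \<Rightarrow> (nat set \<Rightarrow> 'k) \<Rightarrow> (nat set \<Rightarrow> 'k)" where
  "escale c x = (\<lambda>S. c * x S)"

text \<open>sign of e_S wedge e_T for disjoint S, T: (-1)^(number of inversions)\<close>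
definition wsign :: "nat set \<Rightarrow> nat set \<Rightarrow> 'k::comm_ring_1" where
  "wsign S T = (-1) ^ card {(s, t). s \<in> S \<and> t \<in> T \<and> t < s}"

definition wedge :: "nat \<Rightarrow> (nat set \<Rightarrow> 'k::comm_ring_1) \<Rightarrow> (nat set \<Rightarrow> 'k) \<Rightarrow> (nat set \<Rightarrow> 'k)" where
  "wedge n x y = (\<lambda>U. if U \<subseteq> {..<n}
      then (\<Sum>S\<in>Pow U. wsign S (U - S) * x S * y (U - S)) else 0)"

definition monom_e :: "nat set \<Rightarrow> (nat set \<Rightarrow> 'k::{zero,one})" where
  "monom_e S = (\<lambda>U. if U = S then 1 else 0)"

text \<open>a vector v of K^n as an element of degree one\<close>
definition vec1 :: "nat \<Rightarrow> (nat \<Rightarrow> 'k::zero) \<Rightarrow> (nat set \<Rightarrow> 'k)" where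
  "vec1 n v = (\<lambda>U. if \<exists>i<n. U = {i} then v (the_elem U) else 0)"

type_synonym 'k ratfun = "'k poly fract"

text \<open>A linear map V(t) -> V(t) given by its matrix M (M i j = i-th coordinate of M e_j).\<close>
definition nonsingular :: "nat \<Rightarrow> (nat \<Rightarrow> nat \<Rightarrow> 'k::field ratfun) \<Rightarrow> bool" where
  "nonsingular n M \<longleftrightarrow> (\<forall>v. (\<forall>i<n. (\<Sum>j<n. M i j * v j) = 0) \<longrightarrow> (\<forall>j<n. v j = 0))"

definition ext_map_monom :: "nat \<Rightarrow> (nat \<Rightarrow> nat \<Rightarrow> 'k::field ratfun) \<Rightarrow> nat set \<Rightarrow> (nat set \<Rightarrow> 'k ratfun)" where
  "ext_map_monom n M S =
     foldr (wedge n) (map (\<lambda>s. vec1 n (\<lambda>i. M i s)) (sorted_list_of_set S)) (monom_e {})"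

definition ext_map :: "nat \<Rightarrow> (nat \<Rightarrow> nat \<Rightarrow> 'k::field ratfun) \<Rightarrow> (nat set \<Rightarrow> 'k ratfun) \<Rightarrow> (nat set \<Rightarrow> 'k ratfun)" where
  "ext_map n M x = (\<Sum>S\<in>Pow {..<n}. escale (x S) (ext_map_monom n M S))"

definition const_ext :: "(nat set \<Rightarrow> 'k::field) \<Rightarrow> (nat set \<Rightarrow> 'k ratfun)" where
  "const_ext x = (\<lambda>S. Fract [:x S:] 1)"

text \<open>y is (a representative of) the limit N x: rescale N(t)x by some nonzero c in F(t)
  so that all coefficients are polynomials p_S with no common divisor of positive degree,
  then evaluate at t = 0.\<close>
definition is_limit :: "nat \<Rightarrow> (nat \<Rightarrow> nat \<Rightarrow> 'k::field ratfun) \<Rightarrow> (nat set \<Rightarrow> 'k) \<Rightarrow> (nat set \<Rightarrow> 'k) \<Rightarrow> bool" where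
  "is_limit n M x y \<longleftrightarrow>
     (\<exists>c p. c \<noteq> 0 \<and>
        (\<forall>U. c * ext_map n M (const_ext x) U = Fract (p U) 1) \<and>
        (\<forall>d. degree d > 0 \<longrightarrow> \<not> (\<forall>U. d dvd p U)) \<and>
        (\<forall>U. y U = poly (p U) 0))"

definition limit_space :: "nat \<Rightarrow> (nat \<Rightarrow> nat \<Rightarrow> 'k::field ratfun) \<Rightarrow> (nat set \<Rightarrow> 'k) set \<Rightarrow> (nat set \<Rightarrow> 'k) set" where
  "limit_space n M L = module.span escale {y. \<exists>x\<in>L. x \<noteq> 0 \<and> is_limit n M x y}"

end

theory Submission
  imports Defs
begin

text \<open>Since the vectors \<open>N(t)e\<^sub>i\<close> anticommute and square to zero, the extension of \<open>N(t)\<close> to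
  \<open>\<bigwedge>V(t)\<close> is multiplicative for the wedge product, so \<open>N(t)x \<wedge> N(t)x' = N(t)(x \<wedge> x') = 0\<close>.
  After rescaling, the coefficient vectors \<open>p\<close>, \<open>p'\<close> of \<open>N(t)x\<close>, \<open>N(t)x'\<close> are polynomial, and a
  ring homomorphism applied coefficientwise commutes with the wedge product: the embedding
  \<open>F[t] \<rightarrow> F(t)\<close> gives \<open>p \<wedge> p' = 0\<close>, and evaluation at \<open>t = 0\<close> then gives \<open>Nx \<wedge> Nx' = 0\<close>.
  Bilinearity extends this from the generators to the spans \<open>NL\<close>, \<open>NL'\<close>.\<close>

lemma wsign_empty_left [simp]: "wsign {} T = 1"
  by (simp add: wsign_def)

lemma wsign_empty_right [simp]: "wsign S {} = 1"
  by (simp add: wsign_def)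

lemma wsign_singleton_left: "wsign {a} T = (-1) ^ card {t \<in> T. t < a}"
proof -
  have "{(s, t). s \<in> {a} \<and> t \<in> T \<and> t < s} = (\<lambda>t. (a, t)) ` {t \<in> T. t < a}"
    by auto
  then show ?thesis
    by (simp add: wsign_def card_image inj_on_def)
qed

lemma wsign_Un_left:
  assumes "finite A" "finite B" "finite C" "A \<inter> B = {}"
  shows "wsign (A \<union> B) C = wsign A C * wsign B C"
proof -
  let ?inv = "\<lambda>A. {(s, t). s \<in> A \<and> t \<in> C \<and> t < s}"
  have "?inv (A \<union> B) = ?inv A \<union> ?inv B" by auto
  moreover have "finite (?inv A)" "finite (?inv B)"
    by (rule finite_subset[of _ "A \<times> C"] finite_subset[of _ "B \<times> C"]; use assms in auto)+
  moreover have "?inv A \<inter> ?inv B = {}" using assms(4) by auto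
  ultimately show ?thesis
    by (simp add: wsign_def card_Un_disjoint power_add)
qed

lemma wsign_Un_right:
  assumes "finite A" "finite B" "finite C" "B \<inter> C = {}"
  shows "wsign A (B \<union> C) = wsign A B * wsign A C"
proof -
  let ?inv = "\<lambda>B. {(s, t). s \<in> A \<and> t \<in> B \<and> t < s}"
  have "?inv (B \<union> C) = ?inv B \<union> ?inv C" by auto
  moreover have "finite (?inv B)" "finite (?inv C)"
    by (rule finite_subset[of _ "A \<times> B"] finite_subset[of _ "A \<times> C"]; use assms in auto)+
  moreover have "?inv B \<inter> ?inv C = {}" using assms(4) by auto
  ultimately show ?thesis
    by (simp add: wsign_def card_Un_disjoint power_add)
qed

lemma wedge_outside: "\<not> U \<subseteq> {..<n} \<Longrightarrow> wedge n x y U = 0"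
  by (simp add: wedge_def)

lemma wedge_apply:
  "U \<subseteq> {..<n} \<Longrightarrow> wedge n x y U = (\<Sum>S\<in>Pow U. wsign S (U - S) * x S * y (U - S))"
  by (simp add: wedge_def)

lemma wedge_in_ext_alg: "wedge n x y \<in> ext_alg n"
  by (simp add: ext_alg_def wedge_def)

lemma wedge_assoc: "wedge n (wedge n x y) z = wedge n x (wedge n y z)"
proof
  fix U
  show "wedge n (wedge n x y) z U = wedge n x (wedge n y z) U"
  proof (cases "U \<subseteq> {..<n}")
    case False
    then show ?thesis by (simp add: wedge_outside)
  next
    case U: True
    have fin: "finite U" using U finite_subset by blast
    have "wedge n (wedge n x y) z U = (\<Sum>(A, S)\<in>Sigma (Pow U) Pow.
        wsign A (U - A) * (wsign S (A - S) * x S * y (A - S)) * z (U - A))"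
      using U fin
      by (subst sum.Sigma [symmetric])
        (auto simp: wedge_apply sum_distrib_left sum_distrib_right intro!: sum.cong intro: finite_subset)
    also have "\<dots> = (\<Sum>(S, B)\<in>Sigma (Pow U) (\<lambda>S. Pow (U - S)).
        wsign S (U - S) * x S * (wsign B (U - S - B) * y B * z (U - S - B)))"
    proof (rule sum.reindex_bij_witness[where i = "\<lambda>(S, B). (S \<union> B, S)"
          and j = "\<lambda>(A, S). (S, A - S)"], auto)
      fix A S assume AU: "A \<subseteq> U" and SA: "S \<subseteq> A"
      define B R where "B = A - S" and "R = U - A"
      have fins: "finite S" "finite B" "finite R"
        using SA AU fin by (auto simp: B_def R_def intro: finite_subset)
      have A: "A = S \<union> B" and "U - S = B \<union> R" "U - S - B = R"
        and "S \<inter> B = {}" "B \<inter> R = {}" "S \<inter> R = {}"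
        using SA AU by (auto simp: B_def R_def)
      then have "wsign A R * wsign S B = wsign S (U - S) * (wsign B R :: 'a)"
        using fins by (simp add: wsign_Un_left wsign_Un_right)
      then show "wsign S (U - S) * x S * (wsign (A - S) (U - S - (A - S)) * y (A - S) * z (U - S - (A - S)))
          = wsign A (U - A) * (wsign S (A - S) * x S * y (A - S)) * z (U - A)"
        using \<open>U - S - B = R\<close> by (simp add: B_def [symmetric] R_def [symmetric] algebra_simps)
    qed
    also have "\<dots> = wedge n x (wedge n y z) U"
      using U fin Diff_subset [THEN subset_trans, OF U]
      by (subst sum.Sigma [symmetric])
        (auto simp: wedge_apply sum_distrib_left sum_distrib_right intro!: sum.cong intro: finite_subset)
    finally show ?thesis .
  qed
qed

lemma wedge_zero_left [simp]: "wedge n 0 y = 0"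
  by (rule ext) (simp add: wedge_def)

lemma wedge_zero_right [simp]: "wedge n x 0 = 0"
  by (rule ext) (simp add: wedge_def)

lemma wedge_add_left: "wedge n (x + x') y = wedge n x y + wedge n x' y"
  by (rule ext) (simp add: wedge_def algebra_simps sum.distrib)

lemma wedge_add_right: "wedge n x (y + y') = wedge n x y + wedge n x y'"
  by (rule ext) (simp add: wedge_def algebra_simps sum.distrib)

lemma wedge_uminus_left: "wedge n (- x) y = - wedge n x y"
  by (rule ext) (simp add: wedge_def sum_negf)

lemma wedge_escale_left: "wedge n (escale c x) y = escale c (wedge n x y)"
  by (rule ext) (simp add: wedge_def escale_def sum_distrib_left algebra_simps)

lemma wedge_escale_right: "wedge n x (escale c y) = escale c (wedge n x y)"
  by (rule ext) (simp add: wedge_def escale_def sum_distrib_left algebra_simps)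

lemma wedge_sum_sum:
  assumes "finite I" "finite J"
  shows "wedge n (\<lambda>U. \<Sum>i\<in>I. a i * x i U) (\<lambda>U. \<Sum>j\<in>J. b j * y j U) W =
    (\<Sum>i\<in>I. \<Sum>j\<in>J. a i * b j * wedge n (x i) (y j) W)"
proof (cases "W \<subseteq> {..<n}")
  case False
  then show ?thesis by (simp add: wedge_outside)
next
  case True
  have "wedge n (\<lambda>U. \<Sum>i\<in>I. a i * x i U) (\<lambda>U. \<Sum>j\<in>J. b j * y j U) W =
    (\<Sum>S\<in>Pow W. \<Sum>i\<in>I. \<Sum>j\<in>J. a i * b j * (wsign S (W - S) * x i S * y j (W - S)))"
    unfolding wedge_apply [OF True]
    by (simp add: sum_distrib_left sum_distrib_right ac_simps)
  also have "\<dots> = (\<Sum>i\<in>I. \<Sum>j\<in>J. a i * b j * wedge n (x i) (y j) W)"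
    unfolding wedge_apply [OF True] sum_distrib_left
    by (subst sum.swap) (simp add: sum.swap [of _ "Pow W"])
  finally show ?thesis .
qed

lemma wedge_one_left:
  assumes "x \<in> ext_alg n"
  shows "wedge n (monom_e {}) x = x"
proof
  fix U
  show "wedge n (monom_e {}) x U = x U"
  proof (cases "U \<subseteq> {..<n}")
    case False
    then show ?thesis using assms by (simp add: wedge_def ext_alg_def)
  next
    case True
    then have "finite U" by (rule finite_subset) simp
    have "wedge n (monom_e {}) x U = (\<Sum>S\<in>Pow U. if S = {} then x U else 0)"
      using True by (auto simp: wedge_apply monom_e_def intro!: sum.cong)
    also have "\<dots> = x U"
      using \<open>finite U\<close> by simp
    finally show ?thesis .
  qed
qed

lemma ring_hom_wedge:
  fixes f :: "'a::comm_ring_1 \<Rightarrow> 'b::comm_ring_1"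
  assumes add: "\<And>a b. f (a + b) = f a + f b" and mult: "\<And>a b. f (a * b) = f a * f b"
    and one: "f 1 = 1"
  shows "f (wedge n x y U) = wedge n (\<lambda>S. f (x S)) (\<lambda>S. f (y S)) U"
proof -
  have zero: "f 0 = 0"
    using add [of 0 0] by simp
  have "f (-1) + f 1 = 0"
    using add [of "-1" 1] zero by simp
  then have "f (-1) = -1"
    using one by (simp add: eq_neg_iff_add_eq_0)
  then have "f ((-1) ^ k) = (-1) ^ k" for k
    by (induction k) (simp_all only: power_Suc power_0 mult one)
  then have "f (wsign S T) = wsign S T" for S T
    by (simp add: wsign_def)
  then show ?thesis
    by (simp add: wedge_def zero mult sum_comp_morphism [of f, symmetric, OF zero add] o_def)
qed

lemma escale_zero [simp]: "escale (c::'a::mult_zero) 0 = 0"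
  by (simp add: escale_def fun_eq_iff)

lemma escale_one [simp]: "escale (1::'a::monoid_mult) x = x"
  by (simp add: escale_def)

lemma escale_escale: "escale (c::'a::semigroup_mult) (escale d x) = escale (c * d) x"
  by (simp add: escale_def mult.assoc fun_eq_iff)

lemma escale_uminus: "- escale (c::'a::ring) x = escale (- c) x"
  by (simp add: escale_def fun_eq_iff)

definition wedge_prod :: "nat \<Rightarrow> (nat \<Rightarrow> nat set \<Rightarrow> 'a::comm_ring_1) \<Rightarrow> nat set \<Rightarrow> nat set \<Rightarrow> 'a" where
  "wedge_prod n v S = foldr (wedge n) (map v (sorted_list_of_set S)) (monom_e {})"

lemma wedge_prod_empty [simp]: "wedge_prod n v {} = monom_e {}"
  by (simp add: wedge_prod_def)

lemma wedge_prod_Min: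
  assumes "finite S" "S \<noteq> {}"
  shows "wedge_prod n v S = wedge n (v (Min S)) (wedge_prod n v (S - {Min S}))"
  by (simp add: wedge_prod_def sorted_list_of_set_nonempty [OF assms])

lemma wedge_prod_in_ext_alg: "wedge_prod n v S \<in> ext_alg n"
  by (cases "sorted_list_of_set S")
    (simp_all add: wedge_prod_def wedge_in_ext_alg, simp add: ext_alg_def monom_e_def)

definition ext_hom :: "nat \<Rightarrow> (nat \<Rightarrow> nat set \<Rightarrow> 'a::comm_ring_1) \<Rightarrow> (nat set \<Rightarrow> 'a) \<Rightarrow> nat set \<Rightarrow> 'a" where
  "ext_hom n v x = (\<lambda>W. \<Sum>S\<in>Pow {..<n}. x S * wedge_prod n v S W)"

text \<open>In characteristic 2, \<open>wedge_self\<close> does not follow from \<open>wedge_swap\<close>.\<close>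

locale wedge_anticommuting =
  fixes n :: nat and v :: "nat \<Rightarrow> nat set \<Rightarrow> 'a::comm_ring_1"
  assumes wedge_self: "wedge n (v a) (v a) = 0"
    and wedge_swap: "wedge n (v a) (v b) = - wedge n (v b) (v a)"
begin

lemma wedge_wedge_prod:
  assumes "finite R"
  shows "wedge n (v a) (wedge_prod n v R) =
    (if a \<in> R then 0 else escale (wsign {a} R) (wedge_prod n v (insert a R)))"
  using assms
proof (induction R arbitrary: a rule: finite_remove_induct)
  case empty
  then show ?case
    using wedge_prod_Min [of "{a}" n v] by simp
next
  case (remove R)
  define b where "b = Min R"
  have b: "b \<in> R" "\<And>r. r \<in> R \<Longrightarrow> b \<le> r"
    using remove by (simp_all add: b_def)
  have R: "wedge_prod n v R = wedge n (v b) (wedge_prod n v (R - {b}))"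
    using wedge_prod_Min remove b_def by blast
  consider "a < b" | "a = b" | "b < a" by linarith
  then show ?case
  proof cases
    case 1
    then have "a \<notin> R" and no_inv: "{r \<in> R. r < a} = {}"
      using b by force+
    have "wsign {a} R = (1 :: 'a)"
      unfolding wsign_singleton_left no_inv by simp
    moreover have "Min (insert a R) = a"
      using 1 b \<open>finite R\<close> by (intro Min_eqI) fastforce+
    ultimately show ?thesis
      using wedge_prod_Min [of "insert a R" n v] \<open>a \<notin> R\<close> \<open>finite R\<close> by simp
  next
    case 2
    then show ?thesis
      using R b by (simp flip: wedge_assoc add: wedge_self)
  next
    case 3
    then have "a \<noteq> b" by simp
    have swap: "wedge n (v a) (wedge_prod n v R) =
        - wedge n (v b) (wedge n (v a) (wedge_prod n v (R - {b})))"
      unfolding R wedge_assoc [symmetric] wedge_swap [of a b] wedge_uminus_left ..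
    show ?thesis
    proof (cases "a \<in> R")
      case True
      with \<open>a \<noteq> b\<close> have "a \<in> R - {b}" by simp
      then have "wedge n (v a) (wedge_prod n v (R - {b})) = 0"
        using remove.IH [OF b(1), of a] by (simp only: if_P)
      then show ?thesis
        using swap True by simp
    next
      case False
      have "Min (insert a R) = b"
        using b 3 \<open>finite R\<close> by (intro Min_eqI) fastforce+
      moreover have "insert a R - {b} = insert a (R - {b})"
        using 3 by auto
      ultimately have aR: "wedge_prod n v (insert a R) = wedge n (v b) (wedge_prod n v (insert a (R - {b})))"
        using wedge_prod_Min [of "insert a R" n v] remove by simp
      have "{r \<in> R. r < a} = insert b {r \<in> R - {b}. r < a}"
        using 3 b by auto
      then have "wsign {a} R = - (wsign {a} (R - {b}) :: 'a)"
        using remove by (simp add: wsign_singleton_left)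
      then show ?thesis
        using swap remove.IH [OF b(1)] False aR by (simp add: wedge_escale_right escale_uminus)
    qed
  qed
qed

lemma wedge_prod_wedge:
  assumes "finite S" "finite T"
  shows "wedge n (wedge_prod n v S) (wedge_prod n v T) =
    (if S \<inter> T = {} then escale (wsign S T) (wedge_prod n v (S \<union> T)) else 0)"
  using assms(1)
proof (induction S rule: finite_remove_induct)
  case empty
  then show ?case by (simp add: wedge_one_left wedge_prod_in_ext_alg)
next
  case (remove S)
  define a S' where "a = Min S" and "S' = S - {a}"
  have a: "a \<in> S" "\<And>r. r \<in> S \<Longrightarrow> a \<le> r"
    using remove by (simp_all add: a_def)
  have S: "S = {a} \<union> S'" "finite S'" "a \<notin> S'"
    using a remove by (auto simp: S'_def)
  have "wedge n (wedge_prod n v S) (wedge_prod n v T) =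
      wedge n (v a) (wedge n (wedge_prod n v S') (wedge_prod n v T))"
    using wedge_prod_Min [of S n v] remove by (simp add: a_def S'_def wedge_assoc)
  also have "\<dots> = (if S' \<inter> T = {} then escale (wsign S' T) (wedge n (v a) (wedge_prod n v (S' \<union> T))) else 0)"
  proof -
    have "wedge n (wedge_prod n v S') (wedge_prod n v T) =
        (if S' \<inter> T = {} then escale (wsign S' T) (wedge_prod n v (S' \<union> T)) else 0)"
      using remove.IH [OF a(1)] unfolding S'_def .
    then show ?thesis
      by (cases "S' \<inter> T = {}") (simp_all add: wedge_escale_right)
  qed
  also have "\<dots> = (if S \<inter> T = {} then escale (wsign S T) (wedge_prod n v (S \<union> T)) else 0)"
  proof (cases "S \<inter> T = {}")
    case True
    have "{r \<in> S' \<union> T. r < a} = {t \<in> T. t < a}"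
      by (auto simp: S'_def dest: a(2))
    then have "wsign {a} (S' \<union> T) = (wsign {a} T :: 'a)"
      unfolding wsign_singleton_left by simp
    moreover have "wsign S T = (wsign {a} T * wsign S' T :: 'a)"
      unfolding S(1) by (rule wsign_Un_left) (use S assms(2) in auto)
    moreover have "insert a (S' \<union> T) = S \<union> T" "a \<notin> S' \<union> T" "S' \<inter> T = {}"
      using S a(1) True by auto
    ultimately show ?thesis
      using True S(2) assms(2) by (simp add: wedge_wedge_prod escale_escale mult.commute)
  next
    case False
    then show ?thesis
      using S by (auto simp: wedge_wedge_prod assms(2))
  qed
  finally show ?case .
qed

lemma ext_hom_wedge: "ext_hom n v (wedge n x y) = wedge n (ext_hom n v x) (ext_hom n v y)"
proof
  fix W
  let ?P = "Pow {..<n}"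
  let ?e = "wedge_prod n v"
  have "wedge n (ext_hom n v x) (ext_hom n v y) W =
      (\<Sum>S\<in>?P. \<Sum>T\<in>?P. x S * y T * wedge n (?e S) (?e T) W)"
    unfolding ext_hom_def by (rule wedge_sum_sum) auto
  also have "\<dots> = (\<Sum>S\<in>?P. \<Sum>T\<in>?P. if S \<inter> T = {} then x S * y T * (wsign S T * ?e (S \<union> T) W) else 0)"
    by (intro sum.cong refl) (auto simp: wedge_prod_wedge escale_def finite_subset)
  also have "\<dots> = (\<Sum>S\<in>?P. \<Sum>T\<in>{T \<in> ?P. S \<inter> T = {}}. x S * y T * (wsign S T * ?e (S \<union> T) W))"
    by (rule sum.cong [OF refl]) (rule sum.inter_filter [symmetric], simp)
  also have "\<dots> = (\<Sum>(S, T)\<in>Sigma ?P (\<lambda>S. {T \<in> ?P. S \<inter> T = {}}). x S * y T * (wsign S T * ?e (S \<union> T) W))"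
    by (rule sum.Sigma) auto
  also have "\<dots> = (\<Sum>(R, S)\<in>Sigma ?P Pow. wsign S (R - S) * x S * y (R - S) * ?e R W)"
  proof (rule sum.reindex_bij_witness [where j = "\<lambda>(S, T). (S \<union> T, S)" and i = "\<lambda>(R, S). (S, R - S)"])
    fix p assume "p \<in> Sigma ?P (\<lambda>S. {T \<in> ?P. S \<inter> T = {}})"
    then obtain S T where "p = (S, T)" "S \<inter> T = {}" by auto
    moreover from \<open>S \<inter> T = {}\<close> have "S \<union> T - S = T" by auto
    ultimately show "(case (case p of (S, T) \<Rightarrow> (S \<union> T, S)) of (R, S) \<Rightarrow> wsign S (R - S) * x S * y (R - S) * ?e R W) =
        (case p of (S, T) \<Rightarrow> x S * y T * (wsign S T * ?e (S \<union> T) W))"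
      by (simp add: algebra_simps)
  qed auto
  also have "\<dots> = (\<Sum>R\<in>?P. \<Sum>S\<in>Pow R. wsign S (R - S) * x S * y (R - S) * ?e R W)"
    by (rule sum.Sigma [symmetric]) (auto intro: finite_subset)
  also have "\<dots> = ext_hom n v (wedge n x y) W"
    unfolding ext_hom_def by (intro sum.cong refl) (auto simp: wedge_apply sum_distrib_right)
  finally show "ext_hom n v (wedge n x y) W = wedge n (ext_hom n v x) (ext_hom n v y) W" ..
qed

end

lemma wedge_vec1_outside_pairs:
  assumes "\<nexists>i j. i < j \<and> j < n \<and> U = {i, j}"
  shows "wedge n (vec1 n a) (vec1 n b) U = 0"
proof (cases "U \<subseteq> {..<n}")
  case False
  then show ?thesis by (simp add: wedge_outside)
next
  case True
  have "vec1 n a S * vec1 n b (U - S) = 0" if "S \<subseteq> U" for S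
  proof (rule ccontr)
    assume "vec1 n a S * vec1 n b (U - S) \<noteq> 0"
    then obtain i j where "i < n" "S = {i}" "j < n" "U - S = {j}"
      by (auto simp: vec1_def split: if_splits)
    with that have "U = {i, j}" "i \<noteq> j" by auto
    with assms \<open>i < n\<close> \<open>j < n\<close> show False
      by (metis insert_commute linorder_neqE_nat)
  qed
  with True show ?thesis
    by (simp add: wedge_apply mult.assoc)
qed

lemma wedge_vec1_pair:
  fixes a b :: "nat \<Rightarrow> 'a::comm_ring_1"
  assumes "i < j" "j < n"
  shows "wedge n (vec1 n a) (vec1 n b) {i, j} = a i * b j - a j * b i"
proof -
  have "Pow {i, j} = {{}, {i}, {j}, {i, j}}" by auto
  moreover have "{i} \<noteq> {j}" "{i, j} \<noteq> {i}" "{i, j} \<noteq> {j}" "{i, j} - {i} = {j}" "{i, j} - {j} = {i}"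
    using assms by auto
  moreover have "vec1 n c {} = 0" "vec1 n c {i, j} = 0" "vec1 n c {i} = c i" "vec1 n c {j} = c j" for c :: "nat \<Rightarrow> 'a"
    using assms by (auto simp: vec1_def)
  moreover have "wsign {i} {j} = (1 :: 'a)" "wsign {j} {i} = (-1 :: 'a)"
  proof -
    have "{t \<in> {j}. t < i} = {}" "{t \<in> {i}. t < j} = {i}"
      using assms by auto
    then show "wsign {i} {j} = (1 :: 'a)" "wsign {j} {i} = (-1 :: 'a)"
      by (simp_all only: wsign_singleton_left) simp_all
  qed
  ultimately show ?thesis
    using assms by (simp add: wedge_apply)
qed

lemma wedge_vec1_swap: "wedge n (vec1 n a) (vec1 n b) = - wedge n (vec1 n b) (vec1 n a)"
proof
  fix U
  show "wedge n (vec1 n a) (vec1 n b) U = (- wedge n (vec1 n b) (vec1 n a)) U"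
    by (cases "\<exists>i j. i < j \<and> j < n \<and> U = {i, j}")
      (auto simp: wedge_vec1_pair wedge_vec1_outside_pairs mult.commute)
qed

lemma wedge_vec1_self: "wedge n (vec1 n a) (vec1 n a) = 0"
proof
  fix U
  show "wedge n (vec1 n a) (vec1 n a) U = 0 U"
    by (cases "\<exists>i j. i < j \<and> j < n \<and> U = {i, j}")
      (auto simp: wedge_vec1_pair wedge_vec1_outside_pairs mult.commute)
qed

lemma wedge_anticommuting_vec1: "wedge_anticommuting n (\<lambda>s. vec1 n (u s))"
  by unfold_locales (rule wedge_vec1_self wedge_vec1_swap)+

lemma sum_fun_apply: "sum f A x = (\<Sum>a\<in>A. f a x)"
  by (induction A rule: infinite_finite_induct) auto

lemma ext_map_eq_ext_hom: "ext_map n M x = ext_hom n (\<lambda>s. vec1 n (\<lambda>i. M i s)) x"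
  by (simp add: ext_map_def ext_hom_def ext_map_monom_def wedge_prod_def escale_def sum_fun_apply fun_eq_iff)

lemma ext_map_wedge: "ext_map n M (wedge n x y) = wedge n (ext_map n M x) (ext_map n M y)"
  unfolding ext_map_eq_ext_hom by (rule wedge_anticommuting.ext_hom_wedge [OF wedge_anticommuting_vec1])

lemma const_ext_wedge: "const_ext (wedge n x y) = wedge n (const_ext x) (const_ext y)"
proof
  fix U
  show "const_ext (wedge n x y) U = wedge n (const_ext x) (const_ext y) U"
    unfolding const_ext_def
    by (rule ring_hom_wedge [where f = "\<lambda>a. Fract [:a:] 1"])
      (simp_all add: One_fract_def mult.commute flip: one_pCons)
qed

lemma ext_map_zero: "ext_map n M 0 = 0"
  by (simp add: ext_map_def escale_def fun_eq_iff sum_fun_apply)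

lemma const_ext_zero: "const_ext 0 = 0"
  by (simp add: const_ext_def fun_eq_iff Zero_fract_def)

lemma wedge_is_limit_eq_0:
  assumes "wedge n x x' = 0" "is_limit n M x y" "is_limit n M x' y'"
  shows "wedge n y y' = 0"
proof -
  obtain c p where c: "\<And>U. c * ext_map n M (const_ext x) U = Fract (p U) 1"
      and y: "y = (\<lambda>U. poly (p U) 0)"
    using assms(2) unfolding is_limit_def by fastforce
  obtain c' p' where c': "\<And>U. c' * ext_map n M (const_ext x') U = Fract (p' U) 1"
      and y': "y' = (\<lambda>U. poly (p' U) 0)"
    using assms(3) unfolding is_limit_def by fastforce
  have "wedge n (ext_map n M (const_ext x)) (ext_map n M (const_ext x')) = 0"
    by (simp flip: ext_map_wedge const_ext_wedge add: assms(1) const_ext_zero ext_map_zero)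
  moreover have "(\<lambda>U. Fract (p U) 1) = escale c (ext_map n M (const_ext x))"
    and "(\<lambda>U. Fract (p' U) 1) = escale c' (ext_map n M (const_ext x'))"
    using c c' by (simp_all add: escale_def)
  ultimately have "wedge n (\<lambda>U. Fract (p U) 1) (\<lambda>U. Fract (p' U) 1) = 0"
    by (simp add: wedge_escale_left wedge_escale_right)
  moreover have "Fract (wedge n p p' U) 1 = wedge n (\<lambda>U. Fract (p U) 1) (\<lambda>U. Fract (p' U) 1) U" for U
    by (rule ring_hom_wedge [where f = "\<lambda>a. Fract a 1"]) (simp_all add: One_fract_def)
  ultimately have "wedge n p p' = 0"
    by (simp add: fun_eq_iff Zero_fract_def eq_fract)
  moreover have "poly (wedge n p p' U) 0 = wedge n y y' U" for U
    unfolding y y' by (rule ring_hom_wedge [where f = "\<lambda>a. poly a 0"]) simp_all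
  ultimately show ?thesis
    by (simp add: fun_eq_iff)
qed

lemma wedge_span_eq_0:
  assumes "y \<in> module.span escale G" "y' \<in> module.span escale G'"
    and "\<And>g g'. g \<in> G \<Longrightarrow> g' \<in> G' \<Longrightarrow> wedge n g g' = 0"
  shows "wedge n y y' = 0"
proof -
  interpret module "escale :: 'a::comm_ring_1 \<Rightarrow> (nat set \<Rightarrow> 'a) \<Rightarrow> _"
    by standard (simp_all add: escale_def fun_eq_iff algebra_simps)
  have "wedge n g y' = 0" if "g \<in> G" for g
    using assms(2)
  proof (rule span_induct)
    show "subspace {y'. wedge n g y' = 0}"
      by (simp add: subspace_def wedge_add_right wedge_escale_right)
  qed (use assms(3) that in simp)
  moreover have "subspace {y. wedge n y y' = 0}"
    by (simp add: subspace_def wedge_add_left wedge_escale_left)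
  ultimately show ?thesis
    using span_induct [OF assms(1)] by blast
qed

theorem lemma2p6:
  fixes n :: nat and M :: "nat \<Rightarrow> nat \<Rightarrow> 'k::field ratfun"
    and L L' :: "(nat set \<Rightarrow> 'k) set"
  assumes "nonsingular n M"
    and "module.subspace escale L" and "L \<subseteq> ext_alg n"
    and "module.subspace escale L'" and "L' \<subseteq> ext_alg n"
    and "\<forall>x\<in>L. \<forall>x'\<in>L'. wedge n x x' = 0"
  shows "\<forall>y\<in>limit_space n M L. \<forall>y'\<in>limit_space n M L'. wedge n y y' = 0"
proof (intro ballI)
  fix y y'
  assume "y \<in> limit_space n M L" "y' \<in> limit_space n M L'"
  then show "wedge n y y' = 0"
    unfolding limit_space_def
  proof (rule wedge_span_eq_0)
    fix g g'
    assume "g \<in> {y. \<exists>x\<in>L. x \<noteq> 0 \<and> is_limit n M x y}" "g' \<in> {y. \<exists>x\<in>L'. x \<noteq> 0 \<and> is_limit n M x y}"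
    then obtain x x' where "x \<in> L" "is_limit n M x g" "x' \<in> L'" "is_limit n M x' g'"
      by blast
    then show "wedge n g g' = 0"
      using assms(6) wedge_is_limit_eq_0 by blast
  qed
qed

end
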